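(* Let $1\le k\le n-1$. There is $\varepsilon>0$ (depending on $k,n$) such that the following holds whenever $\alpha_1,\dots,\alpha_{k-1}>0$ satisfy $\alpha_{i+1}<\varepsilon\,\alpha_i$ for all $i$. Define $w:V_{k,n}\to\mathbb{R}$ by $w(i_1,\dots,i_k)=\sum_{1\le a<b\le k}\alpha_{b-a}\,i_a i_b$. Let $\{I,J\}$ and $\{X,Y\}$ be two different pairs of elements of $V_{k,n}$ such that $I$ and $J$ are noncrossing and $\chi_I+\chi_J=\chi_X+\chi_Y$. Then $X$ and $Y$ are crossing (i.e. not noncrossing), and $w(I)+w(J)<w(X)+w(Y)$.
   Context: $V_{k,n}$ denotes the set of integer vectors $I=(i_1,\dots,i_k)$ with $1\le i_1<\dots<i_k\le n$. Two arcs $(p<p')$ and $(q<q')$ cross if $p<q<p'<q'$ or $q<p<q'<p'$. $I,J\in V_{k,n}$ are noncrossing if for all indices $1\le a<b\le k$ such that $i_\ell=j_\ell$ for all $a<\ell<b$, the arcs $(i_a<i_b)$ and $(j_a<j_b)$ do not cross. Let $P_{k,n}=\{(a,b):a\in[k],b\in[n-k]\}$ and $\chi_I\in\{0,1\}^{P_{k,n}}$ with $(\chi_I)_{a,b}=1$ iff $i_a\le a+b-1$. *)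

theory Defs
  imports Complex_Main
begin

text \<open>Vectors I = (i_1,...,i_k) are represented as lists of length k; the entry
  i_a (1-based) is  I ! (a - 1).\<close>

definition vent :: "nat list \<Rightarrow> nat \<Rightarrow> nat" where
  "vent I a = I ! (a - 1)"

definition Vkn :: "nat \<Rightarrow> nat \<Rightarrow> nat list set" where
  "Vkn k n = {I. length I = k \<and> sorted_wrt (<) I \<and> set I \<subseteq> {1..n}}"

definition arcs_cross :: "nat \<Rightarrow> nat \<Rightarrow> nat \<Rightarrow> nat \<Rightarrow> bool" where
  "arcs_cross p p' q q' \<longleftrightarrow> (p < q \<and> q < p' \<and> p' < q') \<or> (q < p \<and> p < q' \<and> q' < p')"

definition noncrossing :: "nat \<Rightarrow> nat list \<Rightarrow> nat list \<Rightarrow> bool" where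
  "noncrossing k I J \<longleftrightarrow>
     (\<forall>a b. 1 \<le> a \<and> a < b \<and> b \<le> k \<and> (\<forall>l. a < l \<and> l < b \<longrightarrow> vent I l = vent J l)
        \<longrightarrow> \<not> arcs_cross (vent I a) (vent I b) (vent J a) (vent J b))"

definition Pkn :: "nat \<Rightarrow> nat \<Rightarrow> (nat \<times> nat) set" where
  "Pkn k n = {1..k} \<times> {1..n - k}"

definition chi :: "nat \<Rightarrow> nat \<Rightarrow> nat list \<Rightarrow> nat \<times> nat \<Rightarrow> int" where
  "chi k n I = (\<lambda>(a, b). if (a, b) \<in> Pkn k n \<and> vent I a \<le> a + b - 1 then 1 else 0)"

definition wt :: "nat \<Rightarrow> (nat \<Rightarrow> real) \<Rightarrow> nat list \<Rightarrow> real" where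
  "wt k \<alpha> I = (\<Sum>(a, b) \<in> {(a, b). 1 \<le> a \<and> a < b \<and> b \<le> k}.
                   \<alpha> (b - a) * real (vent I a) * real (vent I b))"

end

theory Submission
  imports Defs
begin

text \<open>Row \<open>a\<close> of \<open>\<chi>\<^sub>I\<close> is the indicator of the thresholds \<open>\<ge> i\<^sub>a\<close>, so \<open>\<chi>\<^sub>I + \<chi>\<^sub>J = \<chi>\<^sub>X + \<chi>\<^sub>Y\<close> means
  that in every position the entries of \<open>X, Y\<close> are those of \<open>I, J\<close>, possibly swapped. Call two
  positions where \<open>I\<close> and \<open>J\<close> differ a mixed pair if exactly one of them is swapped; since
  \<open>{I, J} \<noteq> {X, Y}\<close> mixed pairs exist. For a mixed pair \<open>a < b\<close> at minimal distance \<open>g\<close>, \<open>I\<close> and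
  \<open>J\<close> agree strictly between \<open>a\<close> and \<open>b\<close>, so the arcs \<open>(i\<^sub>a, i\<^sub>b)\<close> and \<open>(j\<^sub>a, j\<^sub>b)\<close> do not cross;
  as the swapped vectors are still increasing, these arcs are nested, hence \<open>X, Y\<close> cross at
  \<open>(a, b)\<close> and \<open>(i\<^sub>a - j\<^sub>a)(i\<^sub>b - j\<^sub>b) \<le> -1\<close>. The weight gain \<open>w(X) + w(Y) - w(I) - w(J)\<close> is
  \<open>\<Sum> \<alpha>\<^bsub>b-a\<^esub> \<cdot> (-(i\<^sub>a - j\<^sub>a)(i\<^sub>b - j\<^sub>b))\<close> over mixed pairs: the terms at distance \<open>g\<close> give at
  least \<open>\<alpha>\<^sub>g\<close>, and each of the at most \<open>k\<^sup>2\<close> others is at least \<open>-\<epsilon> \<alpha>\<^sub>g n\<^sup>2\<close>.\<close>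

lemma sorted_wrt_less_nth_gap:
  assumes "sorted_wrt (<) (xs :: nat list)" "i \<le> j" "j < length xs"
  shows "xs ! i + (j - i) \<le> xs ! j"
  using assms(2,3)
proof (induction j rule: dec_induct)
  case (step j)
  then have "xs ! j < xs ! Suc j" using assms(1) by (simp add: sorted_wrt_nth_less)
  with step show ?case by simp
qed simp

lemma Vkn_vent_bounds:
  assumes "I \<in> Vkn k n" "1 \<le> a" "a \<le> k"
  shows "a \<le> vent I a" "vent I a + (k - a) \<le> n"
proof -
  have len: "length I = k" and sorted: "sorted_wrt (<) I" and range: "set I \<subseteq> {1..n}"
    using assms(1) by (auto simp: Vkn_def)
  have "I ! 0 \<in> set I" "I ! (k - 1) \<in> set I" using len assms by simp_all
  then have "1 \<le> I ! 0" "I ! (k - 1) \<le> n" using range by auto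
  moreover have "I ! 0 + (a - 1) \<le> I ! (a - 1)" "I ! (a - 1) + (k - a) \<le> I ! (k - 1)"
    using sorted_wrt_less_nth_gap[OF sorted, of 0 "a - 1"]
      sorted_wrt_less_nth_gap[OF sorted, of "a - 1" "k - 1"] len assms by auto
  ultimately show "a \<le> vent I a" "vent I a + (k - a) \<le> n"
    using assms unfolding vent_def by linarith+
qed

lemma Vkn_vent_less:
  assumes "I \<in> Vkn k n" "1 \<le> a" "a < b" "b \<le> k"
  shows "vent I a < vent I b"
  using assms sorted_wrt_nth_less[of "(<)" I "a - 1" "b - 1"] by (auto simp: Vkn_def vent_def)

lemma Vkn_eqI:
  assumes "I \<in> Vkn k n" "J \<in> Vkn k n" "\<And>a. 1 \<le> a \<Longrightarrow> a \<le> k \<Longrightarrow> vent I a = vent J a"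
  shows "I = J"
proof (rule nth_equalityI)
  show "length I = length J" using assms by (simp add: Vkn_def)
  fix t assume "t < length I"
  then show "I ! t = J ! t" using assms(1) assms(3)[of "t + 1"] by (simp add: Vkn_def vent_def)
qed

lemma chi_row:
  assumes "1 \<le> a" "a \<le> k" "a \<le> T" "T < n - k + a"
  shows "chi k n I (a, T + 1 - a) = of_bool (vent I a \<le> T)"
  using assms by (auto simp: chi_def Pkn_def)

text \<open>Two numbers in \<open>[lo, hi]\<close> are determined, up to order, by how many of them lie below each
  \<open>T \<in> [lo, hi)\<close>: the least \<open>T\<close> with a positive count is their minimum, the least \<open>T\<close> with
  count 2 their maximum.\<close>

lemma count_below_min_le:
  fixes i j x y :: nat
  assumes count: "\<And>T. lo \<le> T \<Longrightarrow> T < hi \<Longrightarrow>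
      (of_bool (i \<le> T) + of_bool (j \<le> T) :: int) = of_bool (x \<le> T) + of_bool (y \<le> T)"
    and "lo \<le> min i j" "min x y \<le> hi"
  shows "min x y \<le> min i j"
proof (rule ccontr)
  assume "\<not> ?thesis"
  then show False
    using count[of "min i j"] assms(2,3) by (auto simp: min_def of_bool_def split: if_splits)
qed

lemma count_below_max_le:
  fixes i j x y :: nat
  assumes count: "\<And>T. lo \<le> T \<Longrightarrow> T < hi \<Longrightarrow>
      (of_bool (i \<le> T) + of_bool (j \<le> T) :: int) = of_bool (x \<le> T) + of_bool (y \<le> T)"
    and "lo \<le> min x y" "max i j \<le> hi"
  shows "max i j \<le> max x y"
proof (rule ccontr)
  assume "\<not> ?thesis"
  then show False
    using count[of "max x y"] assms(2,3) by (auto simp: max_def of_bool_def split: if_splits)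
qed

lemma count_below_eq_imp_swap:
  fixes i j x y :: nat
  assumes count: "\<And>T. lo \<le> T \<Longrightarrow> T < hi \<Longrightarrow>
      (of_bool (i \<le> T) + of_bool (j \<le> T) :: int) = of_bool (x \<le> T) + of_bool (y \<le> T)"
    and "lo \<le> i" "lo \<le> j" "lo \<le> x" "lo \<le> y" "i \<le> hi" "j \<le> hi" "x \<le> hi" "y \<le> hi"
  shows "(x = i \<and> y = j) \<or> (x = j \<and> y = i)"
proof -
  have count': "\<And>T. lo \<le> T \<Longrightarrow> T < hi \<Longrightarrow>
      (of_bool (x \<le> T) + of_bool (y \<le> T) :: int) = of_bool (i \<le> T) + of_bool (j \<le> T)"
    using count by simp
  have "min x y = min i j" "max x y = max i j"
    using count_below_min_le[OF count] count_below_min_le[OF count']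
      count_below_max_le[OF count] count_below_max_le[OF count'] assms(2-)
    by (simp_all add: le_antisym)
  then show ?thesis by (auto simp: min_def max_def split: if_splits)
qed

lemma chi_sum_eq_imp_entries_swap:
  assumes I: "I \<in> Vkn k n" and J: "J \<in> Vkn k n" and X: "X \<in> Vkn k n" and Y: "Y \<in> Vkn k n"
    and chi_sum: "(\<lambda>p. chi k n I p + chi k n J p) = (\<lambda>p. chi k n X p + chi k n Y p)"
    and a: "1 \<le> a" "a \<le> k"
  shows "(vent X a = vent I a \<and> vent Y a = vent J a) \<or> (vent X a = vent J a \<and> vent Y a = vent I a)"
proof (rule count_below_eq_imp_swap[where lo = a and hi = "n - k + a"])
  fix T assume "a \<le> T" "T < n - k + a"
  then show "(of_bool (vent I a \<le> T) + of_bool (vent J a \<le> T) :: int) =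
      of_bool (vent X a \<le> T) + of_bool (vent Y a \<le> T)"
    using fun_cong[OF chi_sum, of "(a, T + 1 - a)"] chi_row[OF a] by simp
qed (use Vkn_vent_bounds[OF I a] Vkn_vent_bounds[OF J a] Vkn_vent_bounds[OF X a]
      Vkn_vent_bounds[OF Y a] in linarith)+

lemma arcs_cross_sym: "arcs_cross p p' q q' \<longleftrightarrow> arcs_cross q q' p p'"
  by (auto simp: arcs_cross_def)

lemma noncrossing_arcs_swap_ends:
  fixes p p' q q' :: nat
  assumes "p < p'" "q < q'" "p < q'" "q < p'" "p \<noteq> q" "p' \<noteq> q'" "\<not> arcs_cross p p' q q'"
  shows "arcs_cross p q' q p'" "(real p - real q) * (real p' - real q') \<le> -1"
proof -
  have nested: "(p < q \<and> q' < p') \<or> (q < p \<and> p' < q')"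
    using assms unfolding arcs_cross_def by auto
  then show "arcs_cross p q' q p'" using assms(1,2) unfolding arcs_cross_def by auto
  show "(real p - real q) * (real p' - real q') \<le> -1"
  proof (cases "p < q")
    case True
    then have "real p - real q \<le> -1" "1 \<le> real p' - real q'" using nested by auto
    then have "(real p - real q) * (real p' - real q') \<le> real p - real q"
      using mult_left_mono_neg[of 1 "real p' - real q'" "real p - real q"] by simp
    with \<open>real p - real q \<le> -1\<close> show ?thesis by linarith
  next
    case False
    then have "1 \<le> real p - real q" "real p' - real q' \<le> -1" using nested by auto
    then have "(real p - real q) * (real p' - real q') \<le> real p' - real q'"
      using mult_right_mono_neg[of 1 "real p - real q" "real p' - real q'"] by simp
    with \<open>real p' - real q' \<le> -1\<close> show ?thesis by linarith
  qed
qed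

lemma geometric_decay_chain:
  fixes \<alpha> :: "nat \<Rightarrow> real"
  assumes pos: "\<And>d. 1 \<le> d \<Longrightarrow> d \<le> K \<Longrightarrow> 0 < \<alpha> d"
    and decay: "\<And>d. 1 \<le> d \<Longrightarrow> d < K \<Longrightarrow> \<alpha> (d + 1) < \<epsilon> * \<alpha> d"
    and "\<epsilon> \<le> 1" "1 \<le> m" "m < g" "g \<le> K"
  shows "\<alpha> g < \<epsilon> * \<alpha> m"
proof -
  have "Suc m \<le> g" using \<open>m < g\<close> by simp
  then show ?thesis using \<open>g \<le> K\<close>
  proof (induction g rule: dec_induct)
    case base
    then show ?case using decay \<open>1 \<le> m\<close> by simp
  next
    case (step g)
    then have "\<alpha> (Suc g) < \<epsilon> * \<alpha> g" using decay[of g] \<open>1 \<le> m\<close> by simp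
    also have "\<dots> \<le> \<alpha> g"
      using pos[of g] step \<open>1 \<le> m\<close> \<open>\<epsilon> \<le> 1\<close> by (simp add: mult_left_le_one_le)
    finally show ?case using step by simp
  qed
qed

lemma sum_pos_of_dominant_term:
  fixes c :: "'a \<Rightarrow> real"
  assumes "finite P" "p0 \<in> P" "\<And>p. p \<in> P \<Longrightarrow> p \<noteq> p0 \<Longrightarrow> - \<delta> \<le> c p"
    and "real (card P) * \<delta> < c p0" "0 \<le> \<delta>"
  shows "0 < sum c P"
proof -
  have "- (real (card (P - {p0})) * \<delta>) \<le> sum c (P - {p0})"
    using sum_mono[of "P - {p0}" "\<lambda>_. - \<delta>" c] assms(3) by simp
  moreover have "real (card (P - {p0})) * \<delta> \<le> real (card P) * \<delta>"
    using assms(1,5) by (intro mult_right_mono) (simp_all add: card_Diff1_le)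
  moreover have "sum c P = c p0 + sum c (P - {p0})" using assms(1,2) by (rule sum.remove)
  ultimately show ?thesis using assms(4) by linarith
qed

locale chi_exchange =
  fixes k n :: nat and I J X Y :: "nat list"
  assumes I_in: "I \<in> Vkn k n" and J_in: "J \<in> Vkn k n"
    and X_in: "X \<in> Vkn k n" and Y_in: "Y \<in> Vkn k n"
    and chi_sum_eq: "(\<lambda>p. chi k n I p + chi k n J p) = (\<lambda>p. chi k n X p + chi k n Y p)"
    and pairs_differ: "{I, J} \<noteq> {X, Y}"
    and IJ_noncrossing: "noncrossing k I J"
begin

definition swapped :: "nat \<Rightarrow> bool" where
  "swapped a \<longleftrightarrow> vent X a \<noteq> vent I a"

definition mixed :: "nat \<Rightarrow> nat \<Rightarrow> bool" where
  "mixed a b \<longleftrightarrow> 1 \<le> a \<and> a < b \<and> b \<le> k \<and> vent I a \<noteq> vent J a \<and> vent I b \<noteq> vent J b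
     \<and> swapped a \<noteq> swapped b"

definition gap :: nat where
  "gap = Min {b - a | a b. mixed a b}"

lemma unswapped_entries:
  assumes "1 \<le> a" "a \<le> k" "\<not> swapped a"
  shows "vent X a = vent I a" "vent Y a = vent J a"
  using chi_sum_eq_imp_entries_swap[OF I_in J_in X_in Y_in chi_sum_eq assms(1,2)] assms(3)
  by (auto simp: swapped_def)

lemma swapped_entries:
  assumes "1 \<le> a" "a \<le> k" "swapped a"
  shows "vent X a = vent J a" "vent Y a = vent I a"
  using chi_sum_eq_imp_entries_swap[OF I_in J_in X_in Y_in chi_sum_eq assms(1,2)] assms(3)
  by (auto simp: swapped_def)

lemma mixed_exists: "\<exists>a b. mixed a b"
proof -
  obtain a1 where a1: "1 \<le> a1" "a1 \<le> k" "swapped a1"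
    using Vkn_eqI[OF X_in I_in] Vkn_eqI[OF Y_in J_in] unswapped_entries pairs_differ by metis
  obtain a2 where a2: "1 \<le> a2" "a2 \<le> k" "\<not> swapped a2" "vent I a2 \<noteq> vent J a2"
  proof -
    have "\<exists>a. 1 \<le> a \<and> a \<le> k \<and> \<not> (vent X a = vent J a \<and> vent Y a = vent I a)"
      using Vkn_eqI[OF X_in J_in] Vkn_eqI[OF Y_in I_in] pairs_differ by (metis insert_commute)
    then show thesis using that swapped_entries unswapped_entries by metis
  qed
  have "vent I a1 \<noteq> vent J a1" using a1 swapped_entries by (simp add: swapped_def)
  then have "mixed a1 a2 \<or> mixed a2 a1"
    using a1 a2 by (cases a1 a2 rule: linorder_cases) (auto simp: mixed_def)
  then show ?thesis by blast
qed

lemma finite_mixed_gaps: "finite {b - a | a b. mixed a b}"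
  by (rule finite_subset[of _ "{..k}"]) (auto simp: mixed_def)

lemma gap_le: "mixed a b \<Longrightarrow> gap \<le> b - a"
  unfolding gap_def using finite_mixed_gaps by (auto intro: Min_le)

lemma gap_attained: obtains a b where "mixed a b" "b - a = gap"
proof -
  have "gap \<in> {b - a | a b. mixed a b}"
    unfolding gap_def using finite_mixed_gaps mixed_exists by (intro Min_in) auto
  then show thesis using that by auto
qed

lemma gap_bounds: "1 \<le> gap" "gap \<le> k - 1"
proof -
  obtain a b where "mixed a b" "b - a = gap" by (rule gap_attained)
  then show "1 \<le> gap" "gap \<le> k - 1" by (auto simp: mixed_def)
qed

lemma gap_pair_interior:
  assumes "mixed a b" "b - a = gap" "a < l" "l < b"
  shows "vent I l = vent J l"
proof (rule ccontr)
  assume "vent I l \<noteq> vent J l"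
  then have "mixed a l \<or> mixed l b" using assms(1,3,4) by (auto simp: mixed_def)
  then show False using gap_le[of a l] gap_le[of l b] assms by auto
qed

lemma gap_pair_crossing:
  assumes "mixed a b" "b - a = gap"
  shows "arcs_cross (vent X a) (vent X b) (vent Y a) (vent Y b)"
    "(real (vent I a) - real (vent J a)) * (real (vent I b) - real (vent J b)) \<le> -1"
proof -
  have ab: "1 \<le> a" "a < b" "b \<le> k" using assms(1) by (auto simp: mixed_def)
  have uncrossed: "\<not> arcs_cross (vent I a) (vent I b) (vent J a) (vent J b)"
    using IJ_noncrossing gap_pair_interior[OF assms] ab unfolding noncrossing_def by blast
  have distinct: "vent I a \<noteq> vent J a" "vent I b \<noteq> vent J b" and "swapped a \<noteq> swapped b"
    using assms(1) by (auto simp: mixed_def)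
  then consider "swapped a" "\<not> swapped b" | "\<not> swapped a" "swapped b" by blast
  then have "arcs_cross (vent X a) (vent X b) (vent Y a) (vent Y b) \<and>
      (real (vent I a) - real (vent J a)) * (real (vent I b) - real (vent J b)) \<le> -1"
  proof cases
    case 1
    then have "vent X a = vent J a" "vent Y a = vent I a" "vent X b = vent I b" "vent Y b = vent J b"
      using swapped_entries[of a] unswapped_entries[of b] ab by auto
    then show ?thesis
      using noncrossing_arcs_swap_ends[OF Vkn_vent_less[OF I_in ab] Vkn_vent_less[OF J_in ab] _ _
          distinct uncrossed] Vkn_vent_less[OF X_in ab] Vkn_vent_less[OF Y_in ab] arcs_cross_sym
      by metis
  next
    case 2
    then have "vent X a = vent I a" "vent Y a = vent J a" "vent X b = vent J b" "vent Y b = vent I b"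
      using unswapped_entries[of a] swapped_entries[of b] ab by auto
    then show ?thesis
      using noncrossing_arcs_swap_ends[OF Vkn_vent_less[OF I_in ab] Vkn_vent_less[OF J_in ab] _ _
          distinct uncrossed] Vkn_vent_less[OF X_in ab] Vkn_vent_less[OF Y_in ab]
      by metis
  qed
  then show "arcs_cross (vent X a) (vent X b) (vent Y a) (vent Y b)"
    "(real (vent I a) - real (vent J a)) * (real (vent I b) - real (vent J b)) \<le> -1"
    by blast+
qed

lemma XY_not_noncrossing: "\<not> noncrossing k X Y"
proof -
  obtain a b where ab: "mixed a b" "b - a = gap" by (rule gap_attained)
  have range: "1 \<le> a" "a < b" "b \<le> k" using ab(1) by (auto simp: mixed_def)
  have "vent X l = vent Y l" if "a < l" "l < b" for l
    using gap_pair_interior[OF ab that] swapped_entries[of l] unswapped_entries[of l] that range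
    by (cases "swapped l") auto
  then show ?thesis using gap_pair_crossing(1)[OF ab] range unfolding noncrossing_def by blast
qed

definition gain :: "nat \<Rightarrow> nat \<Rightarrow> real" where
  "gain a b = real (vent X a) * real (vent X b) + real (vent Y a) * real (vent Y b)
     - real (vent I a) * real (vent I b) - real (vent J a) * real (vent J b)"

lemma wt_exchange_diff:
  "wt k \<alpha> X + wt k \<alpha> Y - (wt k \<alpha> I + wt k \<alpha> J) =
    (\<Sum>(a, b) \<in> {(a, b). 1 \<le> a \<and> a < b \<and> b \<le> k}. \<alpha> (b - a) * gain a b)"
  unfolding wt_def gain_def
  by (simp add: split_def sum_subtractf[symmetric] sum.distrib[symmetric] algebra_simps)

lemma gain_eq:
  assumes "1 \<le> a" "a \<le> k" "1 \<le> b" "b \<le> k"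
  shows "gain a b = (if swapped a = swapped b then 0
    else - ((real (vent I a) - real (vent J a)) * (real (vent I b) - real (vent J b))))"
  using assms by (cases "swapped a"; cases "swapped b")
    (simp_all add: gain_def swapped_entries unswapped_entries algebra_simps)

lemma gain_nonzero_imp_mixed:
  assumes "1 \<le> a" "a < b" "b \<le> k" "gain a b \<noteq> 0"
  shows "mixed a b"
  using assms gain_eq[of a b] by (auto simp: mixed_def split: if_splits)

lemma abs_gain_le:
  assumes "1 \<le> a" "a \<le> k" "1 \<le> b" "b \<le> k"
  shows "\<bar>gain a b\<bar> \<le> real n ^ 2"
proof -
  have "\<bar>real (vent I c) - real (vent J c)\<bar> \<le> real n" if "1 \<le> c" "c \<le> k" for c
    using Vkn_vent_bounds(2)[OF I_in that] Vkn_vent_bounds(2)[OF J_in that] by linarith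
  then have "\<bar>(real (vent I a) - real (vent J a)) * (real (vent I b) - real (vent J b))\<bar>
      \<le> real n * real n"
    unfolding abs_mult using assms by (intro mult_mono) auto
  then show ?thesis using gain_eq[OF assms] by (simp add: power2_eq_square)
qed

lemma gap_pair_gain:
  assumes "mixed a b" "b - a = gap"
  shows "1 \<le> gain a b"
  using gain_eq[of a b] gap_pair_crossing(2)[OF assms] assms(1) by (simp add: mixed_def)

context
  fixes \<alpha> :: "nat \<Rightarrow> real" and \<epsilon> :: real
  assumes \<alpha>_pos: "\<And>d. 1 \<le> d \<Longrightarrow> d \<le> k - 1 \<Longrightarrow> 0 < \<alpha> d"
    and \<alpha>_decay: "\<And>d. 1 \<le> d \<Longrightarrow> d < k - 1 \<Longrightarrow> \<alpha> (d + 1) < \<epsilon> * \<alpha> d"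
    and \<epsilon>_nonneg: "0 \<le> \<epsilon>" and \<epsilon>_le_1: "\<epsilon> \<le> 1"
begin

lemma gain_term_lower_bound:
  assumes "1 \<le> a" "a < b" "b \<le> k"
  shows "- (\<epsilon> * \<alpha> gap * real n ^ 2) \<le> \<alpha> (b - a) * gain a b"
proof -
  have "0 < \<alpha> gap" "0 < \<alpha> (b - a)" using \<alpha>_pos gap_bounds assms by auto
  then have slack: "0 \<le> \<epsilon> * \<alpha> gap * real n ^ 2" using \<epsilon>_nonneg by simp
  show ?thesis
  proof (cases "gain a b = 0")
    case False
    then have mixed: "mixed a b" using gain_nonzero_imp_mixed assms by blast
    then consider "b - a = gap" | "gap < b - a" using gap_le by fastforce
    then show ?thesis
    proof cases
      case 1
      then have "1 \<le> gain a b" using gap_pair_gain mixed by blast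
      then have "0 < \<alpha> (b - a) * gain a b" using \<open>0 < \<alpha> (b - a)\<close> by simp
      then show ?thesis using slack by linarith
    next
      case 2
      then have "\<alpha> (b - a) < \<epsilon> * \<alpha> gap"
        using geometric_decay_chain[where \<alpha> = \<alpha> and \<epsilon> = \<epsilon> and K = "k - 1",
            OF \<alpha>_pos \<alpha>_decay \<epsilon>_le_1 gap_bounds(1)] assms
        by simp
      then have "\<alpha> (b - a) * real n ^ 2 \<le> \<epsilon> * \<alpha> gap * real n ^ 2"
        by (intro mult_right_mono) auto
      moreover have "\<bar>\<alpha> (b - a) * gain a b\<bar> \<le> \<alpha> (b - a) * real n ^ 2"
        using mult_left_mono[OF abs_gain_le[of a b], of "\<alpha> (b - a)"] assms \<open>0 < \<alpha> (b - a)\<close>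
        by (simp add: abs_mult)
      ultimately show ?thesis by linarith
    qed
  qed (use slack in simp)
qed

lemma wt_exchange_increase:
  assumes small: "\<epsilon> * (real k * real n) ^ 2 < 1"
  shows "wt k \<alpha> I + wt k \<alpha> J < wt k \<alpha> X + wt k \<alpha> Y"
proof -
  define P where "P = {(a, b). 1 \<le> a \<and> a < b \<and> b \<le> k}"
  obtain a0 b0 where mixed0: "mixed a0 b0" "b0 - a0 = gap" by (rule gap_attained)
  have P_sub: "P \<subseteq> {1..k} \<times> {1..k}" by (auto simp: P_def)
  then have "finite P" by (rule finite_subset) simp
  have "real (card P) \<le> real k * real k"
    using card_mono[OF _ P_sub] by (simp flip: of_nat_mult)
  then have "real (card P) * (\<epsilon> * \<alpha> gap * real n ^ 2)
      \<le> real k * real k * (\<epsilon> * \<alpha> gap * real n ^ 2)"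
    using \<epsilon>_nonneg \<alpha>_pos[OF gap_bounds] by (intro mult_right_mono) auto
  also have "\<dots> = \<alpha> gap * (\<epsilon> * (real k * real n) ^ 2)" by (simp add: power2_eq_square)
  also have "\<dots> < \<alpha> gap" using small \<alpha>_pos[OF gap_bounds] by simp
  also have "\<dots> \<le> \<alpha> (b0 - a0) * gain a0 b0"
    using mult_left_mono[OF gap_pair_gain[OF mixed0]] \<alpha>_pos[OF gap_bounds] mixed0(2) by simp
  finally have "0 < (\<Sum>(a, b) \<in> P. \<alpha> (b - a) * gain a b)"
    using gain_term_lower_bound \<alpha>_pos[OF gap_bounds] \<epsilon>_nonneg mixed0(1)
    by (intro sum_pos_of_dominant_term[where \<delta> = "\<epsilon> * \<alpha> gap * real n ^ 2", OF \<open>finite P\<close>])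
      (auto simp: P_def mixed_def)
  then show ?thesis using wt_exchange_diff[of \<alpha>] unfolding P_def by linarith
qed

end

end

theorem lemma4p5:
  fixes k n :: nat
  assumes "1 \<le> k" and "k \<le> n - 1"
  shows "\<exists>\<epsilon>::real. \<epsilon> > 0 \<and>
    (\<forall>\<alpha> :: nat \<Rightarrow> real.
       (\<forall>i. 1 \<le> i \<and> i \<le> k - 1 \<longrightarrow> \<alpha> i > 0) \<and>
       (\<forall>i. 1 \<le> i \<and> i < k - 1 \<longrightarrow> \<alpha> (i + 1) < \<epsilon> * \<alpha> i) \<longrightarrow>
       (\<forall>I J X Y. I \<in> Vkn k n \<and> J \<in> Vkn k n \<and> X \<in> Vkn k n \<and> Y \<in> Vkn k n \<and>
          {I, J} \<noteq> {X, Y} \<and> noncrossing k I J \<and>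
          (\<lambda>p. chi k n I p + chi k n J p) = (\<lambda>p. chi k n X p + chi k n Y p) \<longrightarrow>
          \<not> noncrossing k X Y \<and> wt k \<alpha> I + wt k \<alpha> J < wt k \<alpha> X + wt k \<alpha> Y))"
proof -
  \<comment> \<open>This \<open>\<epsilon>\<close> works for all \<open>k\<close> and \<open>n\<close>.\<close>
  define \<epsilon> :: real where "\<epsilon> = 1 / (1 + (real k * real n) ^ 2)"
  have "0 < 1 + (real k * real n) ^ 2" by (simp add: add_pos_nonneg)
  then have \<epsilon>: "0 < \<epsilon>" "\<epsilon> \<le> 1" "\<epsilon> * (real k * real n) ^ 2 < 1"
    unfolding \<epsilon>_def by (simp_all add: field_simps)
  show ?thesis
  proof (intro exI[of _ \<epsilon>] conjI \<epsilon>(1) allI impI)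
    fix \<alpha> :: "nat \<Rightarrow> real" and I J X Y
    assume \<alpha>: "(\<forall>i. 1 \<le> i \<and> i \<le> k - 1 \<longrightarrow> \<alpha> i > 0) \<and>
      (\<forall>i. 1 \<le> i \<and> i < k - 1 \<longrightarrow> \<alpha> (i + 1) < \<epsilon> * \<alpha> i)"
    assume "I \<in> Vkn k n \<and> J \<in> Vkn k n \<and> X \<in> Vkn k n \<and> Y \<in> Vkn k n \<and>
      {I, J} \<noteq> {X, Y} \<and> noncrossing k I J \<and>
      (\<lambda>p. chi k n I p + chi k n J p) = (\<lambda>p. chi k n X p + chi k n Y p)"
    then interpret chi_exchange k n I J X Y by unfold_locales blast+
    show "\<not> noncrossing k X Y" by (rule XY_not_noncrossing)
    show "wt k \<alpha> I + wt k \<alpha> J < wt k \<alpha> X + wt k \<alpha> Y"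
      using \<alpha> \<epsilon> by (intro wt_exchange_increase) auto
  qed
qed

end
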